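(* Let $G$ be a group, $\mathbb{F}$ a field, and $\mathsf{a},\mathsf{b}\in\mathbb{F}[G]$ with $|supp(\mathsf{a})|=n$ and $\mathsf{a}\mathsf{b}=1$. Then every vertex of $U(\mathsf{a},\mathsf{b})$ has degree in $\{n-1,n,\dots,n(n-1)\}$. Moreover, $U(\mathsf{a},\mathsf{b})$ has at most one vertex of degree $n-1$.
   Context: $supp(\gamma)=\{x\in G:\gamma_x\ne0\}$. The unit graph $U(\mathsf{a},\mathsf{b})$ (for $\mathsf{a}\mathsf{b}=1$) is the multigraph with vertex set $supp(\mathsf{b})$ whose edges are the sets $\{(h,h',g,g'),(h',h,g',g)\}$ with $h,h'\in supp(\mathsf{a})$, $g,g'\in supp(\mathsf{b})$, $g\ne g'$, $hg=h'g'$; such an edge joins $g$ and $g'$. The degree of a vertex is the number of edges incident to it. *)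

theory Defs
  imports "HOL-Algebra.Group"
begin

definition supp :: "('g \<Rightarrow> 'f::zero) \<Rightarrow> 'g set" where
  "supp \<gamma> = {x. \<gamma> x \<noteq> 0}"

definition grp_alg_elem :: "('g, 'm) monoid_scheme \<Rightarrow> ('g \<Rightarrow> 'f::zero) \<Rightarrow> bool" where
  "grp_alg_elem G \<gamma> \<longleftrightarrow> finite (supp \<gamma>) \<and> supp \<gamma> \<subseteq> carrier G"

definition grp_alg_mult :: "('g, 'm) monoid_scheme \<Rightarrow> ('g \<Rightarrow> 'f::field) \<Rightarrow> ('g \<Rightarrow> 'f) \<Rightarrow> 'g \<Rightarrow> 'f" where
  "grp_alg_mult G a b x =
     (\<Sum>p\<in>{(h, g). h \<in> supp a \<and> g \<in> supp b \<and> h \<otimes>\<^bsub>G\<^esub> g = x}. a (fst p) * b (snd p))"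

definition grp_alg_one :: "('g, 'm) monoid_scheme \<Rightarrow> 'g \<Rightarrow> 'f::field" where
  "grp_alg_one G x = (if x = \<one>\<^bsub>G\<^esub> then 1 else 0)"

definition unit_graph_edges ::
  "('g, 'm) monoid_scheme \<Rightarrow> ('g \<Rightarrow> 'f::field) \<Rightarrow> ('g \<Rightarrow> 'f) \<Rightarrow> ('g \<times> 'g \<times> 'g \<times> 'g) set set" where
  "unit_graph_edges G a b =
     {{(h, h', g, g'), (h', h, g', g)} | h h' g g'.
        h \<in> supp a \<and> h' \<in> supp a \<and> g \<in> supp b \<and> g' \<in> supp b \<and> g \<noteq> g' \<and>
        h \<otimes>\<^bsub>G\<^esub> g = h' \<otimes>\<^bsub>G\<^esub> g'}"

text \<open>The edge {(h,h',g,g'),(h',h,g',g)} joins g and g'; a vertex v is incident to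
  an edge iff v is the third component of one of its two tuples.\<close>
definition unit_graph_degree ::
  "('g, 'm) monoid_scheme \<Rightarrow> ('g \<Rightarrow> 'f::field) \<Rightarrow> ('g \<Rightarrow> 'f) \<Rightarrow> 'g \<Rightarrow> nat" where
  "unit_graph_degree G a b v =
     card {e \<in> unit_graph_edges G a b. \<exists>h h' g'. (h, h', v, g') \<in> e}"

end

theory Submission
  imports Defs
begin

text \<open>An edge at v is determined by a triple (h, h', g') with h v = h' g' and g' \<noteq> v, so the
  degree of v counts such triples. Since g' is then determined by (h, h') and h \<noteq> h', there are
  at most n(n - 1) of them. Conversely, if h v \<noteq> 1 the coefficient of ab at h v vanishes, so the
  product h v cannot be realised by the pair (h, v) alone: some other pair (h', g') with g' \<noteq> v
  realises it. Hence every h \<in> supp a except possibly v\<inverse> occurs, giving degree at least n - 1,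
  and degree n - 1 forces v\<inverse> \<in> supp a while no other g' \<in> supp b has g'\<inverse> \<in> supp a.
  Two vertices of degree n - 1 therefore coincide.\<close>

definition unit_graph_darts ::
  "('g, 'm) monoid_scheme \<Rightarrow> ('g \<Rightarrow> 'f::zero) \<Rightarrow> ('g \<Rightarrow> 'f) \<Rightarrow> 'g \<Rightarrow> ('g \<times> 'g \<times> 'g) set" where
  "unit_graph_darts G a b v =
     {(h, h', g'). h \<in> supp a \<and> h' \<in> supp a \<and> g' \<in> supp b \<and> g' \<noteq> v \<and>
        h \<otimes>\<^bsub>G\<^esub> v = h' \<otimes>\<^bsub>G\<^esub> g'}"

definition dart_edge :: "'g \<Rightarrow> 'g \<times> 'g \<times> 'g \<Rightarrow> ('g \<times> 'g \<times> 'g \<times> 'g) set" where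
  "dart_edge v t = (case t of (h, h', g') \<Rightarrow> {(h, h', v, g'), (h', h, g', v)})"

lemma finite_unit_graph_darts:
  assumes "finite (supp a)" "finite (supp b)"
  shows "finite (unit_graph_darts G a b v)"
proof (rule finite_subset)
  show "unit_graph_darts G a b v \<subseteq> supp a \<times> supp a \<times> supp b"
    unfolding unit_graph_darts_def by auto
qed (use assms in auto)

lemma incident_edges_eq_dart_edges:
  assumes "v \<in> supp b"
  shows "{e \<in> unit_graph_edges G a b. \<exists>h h' g'. (h, h', v, g') \<in> e}
           = dart_edge v ` unit_graph_darts G a b v"
proof (intro equalityI subsetI)
  fix e assume "e \<in> {e \<in> unit_graph_edges G a b. \<exists>h h' g'. (h, h', v, g') \<in> e}"
  then obtain h h' g g' x y z where e: "e = {(h, h', g, g'), (h', h, g', g)}"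
    and edge: "h \<in> supp a" "h' \<in> supp a" "g \<in> supp b" "g' \<in> supp b" "g \<noteq> g'"
      "h \<otimes>\<^bsub>G\<^esub> g = h' \<otimes>\<^bsub>G\<^esub> g'"
    and "(x, y, v, z) \<in> e"
    unfolding unit_graph_edges_def by blast
  then consider "g = v" | "g' = v" by auto
  then show "e \<in> dart_edge v ` unit_graph_darts G a b v"
  proof cases
    case 1
    then have "(h, h', g') \<in> unit_graph_darts G a b v" "e = dart_edge v (h, h', g')"
      using edge e unfolding unit_graph_darts_def dart_edge_def by auto
    then show ?thesis by blast
  next
    case 2
    then have "(h', h, g) \<in> unit_graph_darts G a b v" "e = dart_edge v (h', h, g)"
      using edge e unfolding unit_graph_darts_def dart_edge_def by auto
    then show ?thesis by blast
  qed
next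
  fix e assume "e \<in> dart_edge v ` unit_graph_darts G a b v"
  then obtain h h' g' where "(h, h', g') \<in> unit_graph_darts G a b v" "e = dart_edge v (h, h', g')"
    by auto
  then show "e \<in> {e \<in> unit_graph_edges G a b. \<exists>h h' g'. (h, h', v, g') \<in> e}"
    using assms unfolding unit_graph_edges_def unit_graph_darts_def dart_edge_def by blast
qed

lemma inj_on_dart_edge: "inj_on (dart_edge v) (unit_graph_darts G a b v)"
proof (rule inj_onI)
  fix t s assume t: "t \<in> unit_graph_darts G a b v" and s: "s \<in> unit_graph_darts G a b v"
    and eq: "dart_edge v t = dart_edge v s"
  obtain h h' g' where t': "t = (h, h', g')" "g' \<noteq> v"
    using t unfolding unit_graph_darts_def by auto
  obtain k k' f' where s': "s = (k, k', f')" "f' \<noteq> v"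
    using s unfolding unit_graph_darts_def by auto
  have "(h, h', v, g') \<in> dart_edge v t" using t' unfolding dart_edge_def by simp
  then have "(h, h', v, g') \<in> {(k, k', v, f'), (k', k, f', v)}"
    using eq s' unfolding dart_edge_def by simp
  with t' s' show "t = s" by auto
qed

lemma unit_graph_degree_eq_card_darts:
  assumes "v \<in> supp b"
  shows "unit_graph_degree G a b v = card (unit_graph_darts G a b v)"
  unfolding unit_graph_degree_def incident_edges_eq_dart_edges[OF assms]
  by (rule card_image[OF inj_on_dart_edge])

lemma card_Sigma_Diff_singleton:
  assumes "finite A"
  shows "card (SIGMA x:A. A - {x}) = card A * (card A - 1)"
proof -
  have "card (SIGMA x:A. A - {x}) = (\<Sum>x\<in>A. card (A - {x}))" using assms by simp
  also have "\<dots> = (\<Sum>x\<in>A. card A - 1)" by (rule sum.cong) (auto simp: assms)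
  finally show ?thesis by simp
qed

lemma (in group) card_unit_graph_darts_le:
  assumes "finite (supp a)" "supp a \<subseteq> carrier G" "supp b \<subseteq> carrier G" "v \<in> carrier G"
  shows "card (unit_graph_darts G a b v) \<le> card (supp a) * (card (supp a) - 1)"
proof -
  let ?pair = "\<lambda>(h, h', g'::'a). (h, h')"
  have "inj_on ?pair (unit_graph_darts G a b v)"
  proof (rule inj_onI)
    fix t s assume "t \<in> unit_graph_darts G a b v" "s \<in> unit_graph_darts G a b v"
      and "?pair t = ?pair s"
    then obtain h h' g\<^sub>1 g\<^sub>2 where ts: "t = (h, h', g\<^sub>1)" "s = (h, h', g\<^sub>2)"
      and "h' \<in> supp a" "g\<^sub>1 \<in> supp b" "g\<^sub>2 \<in> supp b" "h' \<otimes> g\<^sub>1 = h' \<otimes> g\<^sub>2"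
      unfolding unit_graph_darts_def by auto
    then have "g\<^sub>1 = g\<^sub>2" using assms(2,3) by (metis Units_eq Units_l_cancel subsetD)
    with ts show "t = s" by simp
  qed
  moreover have "?pair ` unit_graph_darts G a b v \<subseteq> (SIGMA h:supp a. supp a - {h})"
    using assms(2-4) by (force simp: unit_graph_darts_def)
  ultimately have "card (unit_graph_darts G a b v) \<le> card (SIGMA h:supp a. supp a - {h})"
    using assms(1) by (metis card_inj_on_le finite_SigmaI finite_Diff)
  then show ?thesis by (simp add: card_Sigma_Diff_singleton[OF assms(1)])
qed

locale group_algebra_unit = group G
  for G :: "('g, 'm) monoid_scheme" (structure) +
  fixes a b :: "'g \<Rightarrow> 'f::field"
  assumes elem_a: "grp_alg_elem G a" and elem_b: "grp_alg_elem G b"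
    and unit: "grp_alg_mult G a b = grp_alg_one G"
begin

lemma finite_supp_a: "finite (supp a)" and finite_supp_b: "finite (supp b)"
  and supp_a_carrier: "supp a \<subseteq> carrier G" and supp_b_carrier: "supp b \<subseteq> carrier G"
  using elem_a elem_b unfolding grp_alg_elem_def by auto

lemma finite_darts: "finite (unit_graph_darts G a b v)"
  by (rule finite_unit_graph_darts[OF finite_supp_a finite_supp_b])

lemma supp_a_nonempty: "supp a \<noteq> {}"
proof
  assume "supp a = {}"
  then have "grp_alg_mult G a b \<one> = 0" unfolding grp_alg_mult_def by simp
  then show False using unit unfolding grp_alg_one_def by (metis one_neq_zero)
qed

text \<open>Without a dart (h, h', g') at v the coefficient of ab at h v would be a h * b v \<noteq> 0,
  but it vanishes because h v \<noteq> 1.\<close>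
lemma in_fst_darts_if_product_ne_one:
  assumes h: "h \<in> supp a" and v: "v \<in> supp b" and ne: "h \<otimes> v \<noteq> \<one>"
  shows "h \<in> fst ` unit_graph_darts G a b v"
proof (rule ccontr)
  assume no_dart: "h \<notin> fst ` unit_graph_darts G a b v"
  have "{(k, g). k \<in> supp a \<and> g \<in> supp b \<and> k \<otimes> g = h \<otimes> v} = {(h, v)}"
  proof (intro equalityI subsetI)
    fix p assume "p \<in> {(k, g). k \<in> supp a \<and> g \<in> supp b \<and> k \<otimes> g = h \<otimes> v}"
    then obtain k g where p: "p = (k, g)" "k \<in> supp a" "g \<in> supp b" "k \<otimes> g = h \<otimes> v"
      by auto
    have "g = v"
    proof (rule ccontr)
      assume "g \<noteq> v"
      then have "(h, k, g) \<in> unit_graph_darts G a b v"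
        using p h unfolding unit_graph_darts_def by auto
      then show False using no_dart by force
    qed
    then have "k = h"
      using p h v supp_a_carrier supp_b_carrier by (metis right_cancel subsetD)
    with p \<open>g = v\<close> show "p \<in> {(h, v)}" by simp
  qed (use h v in auto)
  then have "grp_alg_mult G a b (h \<otimes> v) = a h * b v" unfolding grp_alg_mult_def by simp
  moreover have "a h * b v \<noteq> 0" using h v unfolding supp_def by simp
  ultimately show False using unit ne unfolding grp_alg_one_def by (metis (full_types))
qed

lemma card_le_card_darts:
  assumes "A \<subseteq> fst ` unit_graph_darts G a b v"
  shows "card A \<le> card (unit_graph_darts G a b v)"
  using card_mono[OF finite_imageI[OF finite_darts] assms] card_image_le[OF finite_darts]
  by (rule le_trans)

lemma card_darts_ge:
  assumes v: "v \<in> supp b"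
  shows "card (supp a) - 1 \<le> card (unit_graph_darts G a b v)"
proof -
  have v_carrier: "v \<in> carrier G" using v supp_b_carrier by blast
  have "supp a - {inv v} \<subseteq> fst ` unit_graph_darts G a b v"
  proof
    fix h assume h: "h \<in> supp a - {inv v}"
    then have "h \<otimes> v \<noteq> \<one>" using supp_a_carrier v_carrier by (metis DiffE inv_equality insertI1 subsetD)
    then show "h \<in> fst ` unit_graph_darts G a b v"
      using in_fst_darts_if_product_ne_one h v by blast
  qed
  then have "card (supp a - {inv v}) \<le> card (unit_graph_darts G a b v)"
    by (rule card_le_card_darts)
  then show ?thesis by (simp add: card_Diff_singleton_if split: if_splits)
qed

lemma minimal_degree_vertex:
  assumes v: "v \<in> supp b" and card_darts: "card (unit_graph_darts G a b v) = card (supp a) - 1"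
  shows "inv v \<in> supp a" and "\<And>h' g'. h' \<in> supp a \<Longrightarrow> g' \<in> supp b \<Longrightarrow> h' \<otimes> g' = \<one> \<Longrightarrow> g' = v"
proof -
  have v_carrier: "v \<in> carrier G" using v supp_b_carrier by blast
  have not_all: "\<not> supp a \<subseteq> fst ` unit_graph_darts G a b v"
  proof
    assume "supp a \<subseteq> fst ` unit_graph_darts G a b v"
    then have "card (supp a) \<le> card (supp a) - 1"
      using card_le_card_darts card_darts by metis
    moreover have "card (supp a) > 0" using supp_a_nonempty finite_supp_a by (simp add: card_gt_0_iff)
    ultimately show False by linarith
  qed
  then obtain h where h: "h \<in> supp a" "h \<notin> fst ` unit_graph_darts G a b v" by blast
  then have "h \<otimes> v = \<one>" using in_fst_darts_if_product_ne_one v by blast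
  then have "h = inv v" using h(1) supp_a_carrier v_carrier by (metis inv_equality subsetD)
  with h show "inv v \<in> supp a" by simp
  fix h' g' assume h': "h' \<in> supp a" and g': "g' \<in> supp b" and inverse: "h' \<otimes> g' = \<one>"
  show "g' = v"
  proof (rule ccontr)
    assume "g' \<noteq> v"
    with \<open>h \<otimes> v = \<one>\<close> h' g' inverse h(1) have "(h, h', g') \<in> unit_graph_darts G a b v"
      unfolding unit_graph_darts_def by simp
    with h(2) show False by force
  qed
qed

lemma minimal_degree_vertex_unique:
  assumes "v \<in> supp b" "card (unit_graph_darts G a b v) = card (supp a) - 1"
    and "w \<in> supp b" "card (unit_graph_darts G a b w) = card (supp a) - 1"
  shows "v = w"
proof -
  have "inv w \<otimes> w = \<one>" using assms(3) supp_b_carrier by (meson l_inv subsetD)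
  then show ?thesis using minimal_degree_vertex[OF assms(3,4)] minimal_degree_vertex(2)[OF assms(1,2)]
    assms(3) by blast
qed

end

theorem mainTheorem9:
  fixes G :: "('g, 'm) monoid_scheme" and a b :: "'g \<Rightarrow> 'f::field" and n :: nat
  assumes "group G"
    and "grp_alg_elem G a" and "grp_alg_elem G b"
    and "card (supp a) = n"
    and "grp_alg_mult G a b = grp_alg_one G"
  shows "(\<forall>v \<in> supp b. unit_graph_degree G a b v \<in> {n - 1 .. n * (n - 1)})
         \<and> card {v \<in> supp b. unit_graph_degree G a b v = n - 1} \<le> 1"
proof -
  interpret group_algebra_unit G a b
    using assms(1,2,3,5) by (simp add: group_algebra_unit_def group_algebra_unit_axioms_def)
  let ?S = "{v \<in> supp b. unit_graph_degree G a b v = n - 1}"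
  have degree_bounds: "unit_graph_degree G a b v \<in> {n - 1 .. n * (n - 1)}" if v: "v \<in> supp b" for v
  proof -
    have "v \<in> carrier G" using v supp_b_carrier by blast
    then show ?thesis
      using card_darts_ge[OF v] card_unit_graph_darts_le[OF finite_supp_a supp_a_carrier supp_b_carrier]
      unfolding unit_graph_degree_eq_card_darts[OF v] assms(4) by simp
  qed
  have "\<forall>v \<in> ?S. \<forall>w \<in> ?S. v = w"
    using minimal_degree_vertex_unique by (auto simp: unit_graph_degree_eq_card_darts assms(4))
  then have "card ?S \<le> 1" using card_le_Suc0_iff_eq[of ?S] finite_supp_b by simp
  with degree_bounds show ?thesis by blast
qed

end
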